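(* Let $u_L\in\mathcal V$ and let $a\in C^1([0,s_0'))$ with $a(0)=1$ and $a(s)\ge1$ for all $s$. For $s>0$ let $u_R=S^i_{u_L}(s)$ and $\tilde\eta_s(u)=a(s)\eta(u|u_L)-\eta(u|u_R)$, $\Pi_s=\{u:\tilde\eta_s(u)<0\}$. Then there exist $R,\bar s,s_0>0$ such that for every $0<s<s_0$ and every $u\in B_R(u_L)\cap\Pi_s$ there exists a unique $s^*(u)\in(0,\bar s)$ satisfying $$\eta\big(u\,|\,S^i_u(s^*(u))\big)=-\tilde\eta_s(u).$$
   Context: Let $\mathcal V\subset\mathbb R^n$ be open and connected, $f\in C^4(\mathcal V;\mathbb R^n)$, system $u_t+(f(u))_x=0$ strictly hyperbolic with eigenvalues $\lambda_k(u)$ and right eigenvectors $r_k(u)$ of $f'(u)$. $\eta$ is a smooth strictly convex entropy, and $\eta(u|v)=\eta(u)-\eta(v)-\nabla\eta(v)(u-v)$ is the relative entropy. $S^i_u(s)$, $s\ge0$, is the $i$-th shock (Hugoniot) curve from $u$, with $S^i_u(0)=u$ and $\frac{d}{ds}S^i_u(0)=r_i(u)$. $B_R(u_L)$ is the open ball of radius $R$ around $u_L$. *)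

theory Defs
  imports "HOL-Analysis.Analysis"
begin

text \<open>C^k regularity on a set (derivatives taken within the set; for open sets this is
the usual notion). Higher derivatives are represented as bounded linear maps.\<close>

definition C1_on :: "('a::real_normed_vector \<Rightarrow> 'b::real_normed_vector) \<Rightarrow> 'a set \<Rightarrow> bool" where
  "C1_on F D \<longleftrightarrow> (\<exists>F' :: 'a \<Rightarrow> ('a \<Rightarrow>\<^sub>L 'b).
     (\<forall>x\<in>D. (F has_derivative blinfun_apply (F' x)) (at x within D)) \<and> continuous_on D F')"

definition C2_on :: "('a::real_normed_vector \<Rightarrow> 'b::real_normed_vector) \<Rightarrow> 'a set \<Rightarrow> bool" where
  "C2_on F D \<longleftrightarrow> (\<exists>F' :: 'a \<Rightarrow> ('a \<Rightarrow>\<^sub>L 'b).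
     (\<forall>x\<in>D. (F has_derivative blinfun_apply (F' x)) (at x within D)) \<and> C1_on F' D)"

definition C3_on :: "('a::real_normed_vector \<Rightarrow> 'b::real_normed_vector) \<Rightarrow> 'a set \<Rightarrow> bool" where
  "C3_on F D \<longleftrightarrow> (\<exists>F' :: 'a \<Rightarrow> ('a \<Rightarrow>\<^sub>L 'b).
     (\<forall>x\<in>D. (F has_derivative blinfun_apply (F' x)) (at x within D)) \<and> C2_on F' D)"

definition C4_on :: "('a::real_normed_vector \<Rightarrow> 'b::real_normed_vector) \<Rightarrow> 'a set \<Rightarrow> bool" where
  "C4_on F D \<longleftrightarrow> (\<exists>F' :: 'a \<Rightarrow> ('a \<Rightarrow>\<^sub>L 'b).
     (\<forall>x\<in>D. (F has_derivative blinfun_apply (F' x)) (at x within D)) \<and> C3_on F' D)"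

text \<open>Strict hyperbolicity: f'(u) has the n pairwise distinct real eigenvalues lam k u
with (nonzero) right eigenvectors r k u, k ranging over the index type 'n (n = CARD('n)).\<close>

definition strictly_hyperbolic ::
  "(real^'n \<Rightarrow> real^'n) \<Rightarrow> (real^'n) set \<Rightarrow> ('n \<Rightarrow> real^'n \<Rightarrow> real) \<Rightarrow> ('n \<Rightarrow> real^'n \<Rightarrow> real^'n) \<Rightarrow> bool" where
  "strictly_hyperbolic f V lam r \<longleftrightarrow>
     (\<forall>u\<in>V. \<forall>k. r k u \<noteq> 0 \<and> frechet_derivative f (at u) (r k u) = lam k u *\<^sub>R r k u) \<and>
     (\<forall>u\<in>V. \<forall>j k. j \<noteq> k \<longrightarrow> lam j u \<noteq> lam k u)"

definition strictly_convex_entropy ::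
  "(real^'n \<Rightarrow> real^'n) \<Rightarrow> (real^'n) set \<Rightarrow> (real^'n \<Rightarrow> real) \<Rightarrow> bool" where
  "strictly_convex_entropy f V eta \<longleftrightarrow>
     C2_on eta V \<and>
     (\<exists>Deta :: real^'n \<Rightarrow> ((real^'n) \<Rightarrow>\<^sub>L real).
        (\<forall>v\<in>V. (eta has_derivative blinfun_apply (Deta v)) (at v)) \<and>
        (\<forall>u\<in>V. \<exists>H. (Deta has_derivative H) (at u) \<and> (\<forall>h. h \<noteq> 0 \<longrightarrow> blinfun_apply (H h) h > 0))) \<and>
     (\<exists>q :: real^'n \<Rightarrow> real. C1_on q V \<and>
        (\<forall>u\<in>V. (q has_derivative (\<lambda>h. frechet_derivative eta (at u) (frechet_derivative f (at u) h))) (at u)))"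

definition rel_entropy :: "(real^'n \<Rightarrow> real) \<Rightarrow> real^'n \<Rightarrow> real^'n \<Rightarrow> real" where
  "rel_entropy eta u v = eta u - eta v - frechet_derivative eta (at v) (u - v)"

text \<open>S is a (jointly C^1) family of i-th shock curves: defined on a set D, relatively open in
V \<times> [0,\<infinity>) and containing V \<times> {0}; S u 0 = u, d/ds S u 0 = r i u, and every S u s lies in V
on the Hugoniot locus of u (Rankine--Hugoniot condition).\<close>

definition shock_curves ::
  "(real^'n \<Rightarrow> real^'n) \<Rightarrow> (real^'n) set \<Rightarrow> ('n \<Rightarrow> real^'n \<Rightarrow> real^'n) \<Rightarrow> 'n \<Rightarrow>
   (real^'n \<Rightarrow> real \<Rightarrow> real^'n) \<Rightarrow> ((real^'n) \<times> real) set \<Rightarrow> bool" where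
  "shock_curves f V r i S D \<longleftrightarrow>
     openin (top_of_set (V \<times> {0..})) D \<and> V \<times> {0} \<subseteq> D \<and>
     C1_on (\<lambda>(u, s). S u s) D \<and>
     (\<forall>u\<in>V. S u 0 = u \<and> (S u has_vector_derivative r i u) (at 0 within {0..})) \<and>
     (\<forall>(u, s)\<in>D. S u s \<in> V \<and> (\<exists>\<sigma>. f (S u s) - f u = \<sigma> *\<^sub>R (S u s - u)))"

definition C1_on_Ico :: "(real \<Rightarrow> real) \<Rightarrow> real \<Rightarrow> bool" where
  "C1_on_Ico a b \<longleftrightarrow> (\<exists>a'. (\<forall>x\<in>{0..<b}. (a has_real_derivative a' x) (at x within {0..<b}))
                              \<and> continuous_on {0..<b} a')"

end

theory Submission
  imports Defs
begin

text \<open>For \<open>u\<close> near \<open>uL\<close> the function \<open>t \<mapsto> \<eta>(u | S\<^sub>u(t))\<close> vanishes at \<open>t = 0\<close> and is strictly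
  increasing for small \<open>t\<close>: its derivative is the Hessian of \<open>\<eta>\<close> at \<open>S\<^sub>u(t)\<close> applied to
  \<open>\<partial>\<^sub>t S\<^sub>u(t)\<close> and to the chord \<open>S\<^sub>u(t) - u\<close>, and both directions stay close to
  \<open>r\<^sub>i(uL) \<noteq> 0\<close>. Its value at a fixed time \<open>t1\<close> is bounded below by some \<open>m/2 > 0\<close> for \<open>u\<close> near
  \<open>uL\<close>, whereas the target value \<open>\<eta>(u | S\<^bsub>uL\<^esub>(s)) - a(s) \<eta>(u | uL)\<close> tends to \<open>0\<close> as
  \<open>(u, s) \<rightarrow> (uL, 0)\<close>. The intermediate value theorem gives \<open>s*(u)\<close>, and strict monotonicity its
  uniqueness.\<close>

lemma norm_chord_deviation_le:
  fixes g :: "real \<Rightarrow> 'a::real_normed_vector"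
  assumes "0 \<le> t"
    and deriv: "\<And>x. x \<in> {0..t} \<Longrightarrow> (g has_vector_derivative g' x) (at x within {0..t})"
    and bound: "\<And>x. x \<in> {0..t} \<Longrightarrow> norm (g' x - v) \<le> e"
  shows "norm (g t - g 0 - t *\<^sub>R v) \<le> t * e"
proof -
  have "norm ((g t - t *\<^sub>R v) - (g 0 - 0 *\<^sub>R v)) \<le> e * norm (t - 0)"
  proof (rule differentiable_bound[where f = "\<lambda>x. g x - x *\<^sub>R v" and f' = "\<lambda>x k. k *\<^sub>R (g' x - v)"])
    fix x assume "x \<in> {0..t}"
    show "((\<lambda>x. g x - x *\<^sub>R v) has_derivative (\<lambda>k. k *\<^sub>R (g' x - v))) (at x within {0..t})"
      using deriv[OF \<open>x \<in> {0..t}\<close>]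
      by (auto intro!: derivative_eq_intros simp: has_vector_derivative_def algebra_simps)
    show "onorm (\<lambda>k. k *\<^sub>R (g' x - v)) \<le> e"
      using bound[OF \<open>x \<in> {0..t}\<close>] by (simp add: onorm_scaleR_left onorm_id)
  qed (use \<open>0 \<le> t\<close> in auto)
  then show ?thesis
    using \<open>0 \<le> t\<close> by (simp add: algebra_simps)
qed

lemma unique_level_crossing:
  fixes \<phi> :: "real \<Rightarrow> real"
  assumes mono: "strict_mono_on {0..<b} \<phi>" and cont: "continuous_on {0..<b} \<phi>"
    and "\<phi> 0 = 0" and "0 < t1" "t1 < b" and "0 < c" "c < \<phi> t1"
  shows "\<exists>!t. t \<in> {0<..<b} \<and> \<phi> t = c"
proof -
  have "continuous_on {0..t1} \<phi>"
    using cont by (rule continuous_on_subset) (use \<open>t1 < b\<close> in auto)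
  then obtain t where t: "0 \<le> t" "t \<le> t1" "\<phi> t = c"
    using IVT'[of \<phi> 0 c t1] assms by auto
  with assms have "t \<in> {0<..<b}"
    by (cases "t = 0") auto
  moreover have "t' = t" if "t' \<in> {0<..<b}" "\<phi> t' = c" for t'
    using strict_mono_on_eqD[OF mono] that \<open>t \<in> {0<..<b}\<close> t(3) by auto
  ultimately show ?thesis
    using t(3) by blast
qed

lemma dist_Pair_le_add: "dist (a, b) (c, d) \<le> dist a c + dist b d"
  by (simp add: dist_Pair_Pair sqrt_sum_squares_le_sum)

lemma bilinear_pos_near:
  fixes B :: "'a::real_normed_vector \<Rightarrow> ('b::real_normed_vector \<Rightarrow>\<^sub>L 'b \<Rightarrow>\<^sub>L real)"
  assumes "isCont B w0" and "B w0 v0 v0 > 0"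
  shows "\<exists>\<epsilon>>0. \<forall>w x y. dist w w0 < \<epsilon> \<longrightarrow> dist x v0 < \<epsilon> \<longrightarrow> dist y v0 < \<epsilon> \<longrightarrow> B w x y > 0"
proof -
  let ?q = "\<lambda>p. B (fst p) (fst (snd p)) (snd (snd p))"
  have "isCont (\<lambda>p::'a \<times> 'b \<times> 'b. B (fst p)) (w0, v0, v0)"
    by (rule isCont_o2[OF isCont_fst[OF continuous_ident]]) (simp add: assms(1))
  then have "isCont ?q (w0, v0, v0)"
    by (intro continuous_intros)
  with assms(2) obtain \<delta> where "\<delta> > 0"
    and \<delta>: "\<And>z. dist z (w0, v0, v0) < \<delta> \<Longrightarrow> dist (?q z) (?q (w0, v0, v0)) < ?q (w0, v0, v0)"
    unfolding continuous_at_eps_delta by fastforce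
  have "B w x y > 0" if "dist w w0 < \<delta>/3" "dist x v0 < \<delta>/3" "dist y v0 < \<delta>/3" for w x y
  proof -
    have "dist (w, x, y) (w0, v0, v0) \<le> dist w w0 + (dist x v0 + dist y v0)"
      using dist_Pair_le_add[of w "(x, y)" w0 "(v0, v0)"] dist_Pair_le_add[of x y v0 v0] by linarith
    then show ?thesis
      using \<delta>[of "(w, x, y)"] that by (simp add: dist_real_def abs_less_iff)
  qed
  then show ?thesis
    using \<open>\<delta> > 0\<close> by (intro exI[of _ "\<delta>/3"]) auto
qed

lemma bregman_along_curve_has_real_derivative:
  fixes eta :: "'a::real_normed_vector \<Rightarrow> real" and F' :: "'a \<Rightarrow> ('a \<Rightarrow>\<^sub>L real)"
    and F'' :: "'a \<Rightarrow> ('a \<Rightarrow>\<^sub>L 'a \<Rightarrow>\<^sub>L real)" and g :: "real \<Rightarrow> 'a"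
  assumes eta: "(eta has_derivative F' (g t)) (at (g t))"
    and F': "(F' has_derivative F'' (g t)) (at (g t))"
    and g: "(g has_vector_derivative g') (at t within T)"
  shows "((\<lambda>\<tau>. eta u - eta (g \<tau>) - F' (g \<tau>) (u - g \<tau>)) has_real_derivative F'' (g t) g' (g t - u))
           (at t within T)"
proof -
  have "((\<lambda>\<tau>. eta (g \<tau>)) has_vector_derivative F' (g t) g') (at t within T)"
    using vector_derivative_diff_chain_within[OF g has_derivative_at_withinI[OF eta]] by (simp add: o_def)
  moreover have "((\<lambda>\<tau>. F' (g \<tau>)) has_vector_derivative F'' (g t) g') (at t within T)"
    using vector_derivative_diff_chain_within[OF g has_derivative_at_withinI[OF F']] by (simp add: o_def)
  then have "((\<lambda>\<tau>. F' (g \<tau>) (u - g \<tau>)) has_vector_derivative F' (g t) (- g') + F'' (g t) g' (u - g t))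
      (at t within T)"
    using bounded_bilinear.has_vector_derivative[OF bounded_bilinear_blinfun_apply _
        has_vector_derivative_diff[OF has_vector_derivative_const g]]
    by simp
  ultimately have "((\<lambda>\<tau>. eta u - eta (g \<tau>) - F' (g \<tau>) (u - g \<tau>)) has_vector_derivative
      0 - F' (g t) g' - (F' (g t) (- g') + F'' (g t) g' (u - g t))) (at t within T)"
    by (intro has_vector_derivative_diff has_vector_derivative_const)
  then show ?thesis
    by (simp add: has_real_derivative_iff_has_vector_derivative blinfun.minus_right blinfun.diff_right)
qed

lemma has_vector_derivative_slice:
  fixes S :: "'a::real_normed_vector \<Rightarrow> real \<Rightarrow> 'b::real_normed_vector"
    and G :: "'a \<times> real \<Rightarrow> (('a \<times> real) \<Rightarrow>\<^sub>L 'b)"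
  assumes "((\<lambda>(u, s). S u s) has_derivative G (u, t)) (at (u, t) within D)"
    and "(\<lambda>\<tau>. (u, \<tau>)) ` T \<subseteq> D"
  shows "(S u has_vector_derivative G (u, t) (0, 1)) (at t within T)"
proof -
  have "((\<lambda>\<tau>. (u, \<tau>)) has_derivative (\<lambda>h. (0, h))) (at t within T)"
    by (auto intro!: derivative_eq_intros)
  moreover have "((\<lambda>(u, s). S u s) has_derivative G (u, t)) (at ((\<lambda>\<tau>. (u, \<tau>)) t) within (\<lambda>\<tau>. (u, \<tau>)) ` T)"
    using assms has_derivative_subset by force
  ultimately have "((\<lambda>(u, s). S u s) \<circ> (\<lambda>\<tau>. (u, \<tau>)) has_derivative G (u, t) \<circ> (\<lambda>h. (0, h))) (at t within T)"
    by (rule diff_chain_within)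
  moreover have "G (u, t) \<circ> (\<lambda>h. (0, h)) = (\<lambda>h. h *\<^sub>R G (u, t) (0, 1))"
  proof
    fix h :: real
    have "(0 :: 'a, h) = h *\<^sub>R (0, 1)"
      by simp
    then show "(G (u, t) \<circ> (\<lambda>h. (0, h))) h = h *\<^sub>R G (u, t) (0, 1)"
      by (metis blinfun.scaleR_right comp_apply)
  qed
  ultimately show ?thesis
    by (simp add: has_vector_derivative_def o_def)
qed

lemma strictly_convex_entropy_hessian:
  fixes eta :: "real^'n \<Rightarrow> real"
  assumes "strictly_convex_entropy f V eta" and "open V"
  obtains F' :: "real^'n \<Rightarrow> ((real^'n) \<Rightarrow>\<^sub>L real)"
    and F'' :: "real^'n \<Rightarrow> ((real^'n) \<Rightarrow>\<^sub>L (real^'n) \<Rightarrow>\<^sub>L real)"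
  where "\<And>x. x \<in> V \<Longrightarrow> (eta has_derivative F' x) (at x)"
    and "\<And>x. x \<in> V \<Longrightarrow> (F' has_derivative F'' x) (at x)"
    and "continuous_on V F''"
    and "\<And>x h. x \<in> V \<Longrightarrow> h \<noteq> 0 \<Longrightarrow> F'' x h h > 0"
proof -
  from assms(1) obtain F' :: "real^'n \<Rightarrow> ((real^'n) \<Rightarrow>\<^sub>L real)"
    and F'' :: "real^'n \<Rightarrow> ((real^'n) \<Rightarrow>\<^sub>L (real^'n) \<Rightarrow>\<^sub>L real)"
    and Deta :: "real^'n \<Rightarrow> ((real^'n) \<Rightarrow>\<^sub>L real)"
    where F'_within: "\<forall>x\<in>V. (eta has_derivative F' x) (at x within V)"
      and F''_within: "\<forall>x\<in>V. (F' has_derivative F'' x) (at x within V)"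
      and F''_cont: "continuous_on V F''"
      and Deta: "\<forall>v\<in>V. (eta has_derivative Deta v) (at v)"
      and hess: "\<forall>u\<in>V. \<exists>H. (Deta has_derivative H) (at u) \<and> (\<forall>h. h \<noteq> 0 \<longrightarrow> blinfun_apply (H h) h > 0)"
    unfolding strictly_convex_entropy_def C2_on_def C1_on_def by blast
  have F': "(eta has_derivative F' x) (at x)" if "x \<in> V" for x
    using F'_within that at_within_open[OF that \<open>open V\<close>] by metis
  have F'': "(F' has_derivative F'' x) (at x)" if "x \<in> V" for x
    using F''_within that at_within_open[OF that \<open>open V\<close>] by metis
  have "Deta v = F' v" if "v \<in> V" for v
    using has_derivative_unique[OF F'[OF that] Deta[rule_format, OF that]] by (simp add: blinfun_apply_inject)
  then have "F'' x h h > 0" if "x \<in> V" "h \<noteq> 0" for x h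
  proof -
    obtain H where H: "(Deta has_derivative H) (at x)" "\<forall>h. h \<noteq> 0 \<longrightarrow> blinfun_apply (H h) h > 0"
      using hess \<open>x \<in> V\<close> by blast
    have "(F' has_derivative H) (at x)"
      using has_derivative_transform_within_open[OF H(1) \<open>open V\<close> \<open>x \<in> V\<close>] \<open>\<And>v. v \<in> V \<Longrightarrow> Deta v = F' v\<close>
      by simp
    then show ?thesis
      using has_derivative_unique[OF _ F''[OF \<open>x \<in> V\<close>]] H(2) \<open>h \<noteq> 0\<close> by metis
  qed
  with F' F'' F''_cont show ?thesis
    using that by blast
qed

lemma shock_curves_velocity:
  assumes "shock_curves f V r i S D"
  obtains S' where "continuous_on D (\<lambda>(u, s). S u s)" and "continuous_on D (\<lambda>(u, s). S' u s)"
    and "\<And>u t T. (u, t) \<in> D \<Longrightarrow> (\<lambda>\<tau>. (u, \<tau>)) ` T \<subseteq> D \<Longrightarrow> (S u has_vector_derivative S' u t) (at t within T)"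
    and "\<And>u. u \<in> V \<Longrightarrow> S' u 0 = r i u"
proof -
  note sc = assms[unfolded shock_curves_def]
  from sc obtain G where G: "\<forall>x\<in>D. ((\<lambda>(u, s). S u s) has_derivative blinfun_apply (G x)) (at x within D)"
    and G_cont: "continuous_on D G"
    unfolding C1_on_def by blast
  from sc obtain T0 where "open T0" and D: "D = V \<times> {0..} \<inter> T0"
    by (auto simp: openin_open)
  have V0: "V \<times> {0} \<subseteq> D" and S0: "\<And>u. u \<in> V \<Longrightarrow> (S u has_vector_derivative r i u) (at 0 within {0..})"
    using sc by blast+
  define S' where "S' u t = G (u, t) (0, 1)" for u t
  have S'_deriv: "(S u has_vector_derivative S' u t) (at t within T)"
    if "(u, t) \<in> D" "(\<lambda>\<tau>. (u, \<tau>)) ` T \<subseteq> D" for u t T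
    unfolding S'_def using has_vector_derivative_slice[where G = G, OF G[rule_format, OF that(1)] that(2)] .
  have "S' u 0 = r i u" if "u \<in> V" for u
  proof -
    have "(u, 0) \<in> T0"
      using V0 that D by auto
    with \<open>open T0\<close>
    obtain \<delta> where "\<delta> > 0" and "ball (u, 0) \<delta> \<subseteq> T0"
      using open_contains_ball by blast
    then have slice: "(\<lambda>\<tau>. (u, \<tau>)) ` {0..\<delta>/2} \<subseteq> D"
      using that by (auto simp: D dist_Pair_Pair)
    have "(S u has_vector_derivative S' u 0) (at 0 within {0..\<delta>/2})"
      using S'_deriv[OF _ slice] V0 that by auto
    moreover have "(S u has_vector_derivative r i u) (at 0 within {0..\<delta>/2})"
      using has_vector_derivative_within_subset[OF S0[OF that]] by auto
    ultimately show ?thesis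
      using vector_derivative_unique_within_closed_interval[of 0 "\<delta>/2" 0] \<open>\<delta> > 0\<close> by auto
  qed
  moreover have "continuous_on D (\<lambda>(u, s). S u s)"
    by (rule has_derivative_continuous_on[of D _ "\<lambda>x. blinfun_apply (G x)"]) (use G in blast)
  moreover have "continuous_on D (\<lambda>p. blinfun_apply (G p) (0, 1))"
    using G_cont by (intro continuous_intros)
  then have "continuous_on D (\<lambda>(u, s). S' u s)"
    by (simp add: S'_def case_prod_beta')
  ultimately show ?thesis
    using that S'_deriv by blast
qed

text \<open>\<open>F'\<close> and \<open>F''\<close> are the gradient and the Hessian of \<open>\<eta>\<close>; \<open>S' u s\<close> is the velocity
  \<open>\<partial>\<^sub>s S u s\<close> of the shock curves.\<close>

locale entropy_shock_family =
  fixes V :: "(real^'n) set" and eta :: "real^'n \<Rightarrow> real"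
    and F' :: "real^'n \<Rightarrow> ((real^'n) \<Rightarrow>\<^sub>L real)"
    and F'' :: "real^'n \<Rightarrow> ((real^'n) \<Rightarrow>\<^sub>L (real^'n) \<Rightarrow>\<^sub>L real)"
    and S S' :: "real^'n \<Rightarrow> real \<Rightarrow> real^'n" and D :: "((real^'n) \<times> real) set" and uL :: "real^'n"
  assumes open_V: "open V" and uL_in_V: "uL \<in> V"
    and eta_deriv: "\<And>x. x \<in> V \<Longrightarrow> (eta has_derivative F' x) (at x)"
    and F'_deriv: "\<And>x. x \<in> V \<Longrightarrow> (F' has_derivative F'' x) (at x)"
    and F''_cont: "continuous_on V F''"
    and hessian_pos: "\<And>x h. x \<in> V \<Longrightarrow> h \<noteq> 0 \<Longrightarrow> F'' x h h > 0"
    and D_openin: "openin (top_of_set (V \<times> {0..})) D" and V0_subset_D: "V \<times> {0} \<subseteq> D"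
    and S_cont: "continuous_on D (\<lambda>(u, s). S u s)" and S'_cont: "continuous_on D (\<lambda>(u, s). S' u s)"
    and S_deriv: "\<And>u t T. (u, t) \<in> D \<Longrightarrow> (\<lambda>\<tau>. (u, \<tau>)) ` T \<subseteq> D \<Longrightarrow>
                    (S u has_vector_derivative S' u t) (at t within T)"
    and S_0: "\<And>u. u \<in> V \<Longrightarrow> S u 0 = u" and S_in_V: "\<And>u s. (u, s) \<in> D \<Longrightarrow> S u s \<in> V"
    and S'_nonzero: "S' uL 0 \<noteq> 0"
begin

lemma rel_entropy_eq: "v \<in> V \<Longrightarrow> rel_entropy eta u v = eta u - eta v - F' v (u - v)"
  unfolding rel_entropy_def using frechet_derivative_at[OF eta_deriv] by simp

lemma rel_entropy_self: "u \<in> V \<Longrightarrow> rel_entropy eta u u = 0"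
  by (simp add: rel_entropy_eq)

lemma continuous_on_rel_entropy:
  assumes "continuous_on A p" "continuous_on A q" "p ` A \<subseteq> V" "q ` A \<subseteq> V"
  shows "continuous_on A (\<lambda>x. rel_entropy eta (p x) (q x))"
proof -
  have "continuous_on V eta"
    using eta_deriv by (intro continuous_at_imp_continuous_on ballI has_derivative_continuous) blast
  moreover have "continuous_on V F'"
    using F'_deriv by (intro continuous_at_imp_continuous_on ballI has_derivative_continuous) blast
  ultimately have "continuous_on A (\<lambda>x. eta (p x))" "continuous_on A (\<lambda>x. eta (q x))"
    "continuous_on A (\<lambda>x. F' (q x))"
    using assms by (auto intro: continuous_on_compose2)
  then have "continuous_on A (\<lambda>x. eta (p x) - eta (q x) - F' (q x) (p x - q x))"
    using assms by (intro continuous_intros)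
  then show ?thesis
    by (rule continuous_on_cong[THEN iffD1, rotated 2]) (use assms rel_entropy_eq in auto)
qed

lemma continuous_on_shock_curves:
  assumes "continuous_on A p" "continuous_on A q" "(\<lambda>x. (p x, q x)) ` A \<subseteq> D"
  shows "continuous_on A (\<lambda>x. S (p x) (q x))"
  using continuous_on_compose2[OF S_cont _ assms(3)] assms(1,2) by (simp add: continuous_on_Pair)

lemma shock_curves_near_base_point:
  assumes "e > 0"
  obtains \<rho> where "\<rho> > 0" and "ball uL \<rho> \<subseteq> V"
    and "\<And>u t. u \<in> ball uL \<rho> \<Longrightarrow> t \<in> {0..<\<rho>} \<Longrightarrow>
           (u, t) \<in> D \<and> dist (S u t) uL < e \<and> dist (S' u t) (S' uL 0) < e"
proof -
  obtain T0 where "open T0" and D: "D = V \<times> {0..} \<inter> T0"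
    using D_openin by (auto simp: openin_open)
  have uL0: "(uL, 0) \<in> D"
    using V0_subset_D uL_in_V by auto
  then obtain \<rho>D where "\<rho>D > 0" and \<rho>D: "ball (uL, 0) \<rho>D \<subseteq> T0"
    using \<open>open T0\<close> open_contains_ball D by blast
  obtain \<rho>V where "\<rho>V > 0" and \<rho>V: "ball uL \<rho>V \<subseteq> V"
    using open_V uL_in_V open_contains_ball by blast
  obtain d1 where "d1 > 0" and d1: "\<And>p. p \<in> D \<Longrightarrow> dist p (uL, 0) < d1 \<Longrightarrow> dist ((\<lambda>(u, s). S u s) p) uL < e"
    using S_cont uL0 \<open>e > 0\<close> S_0[OF uL_in_V] unfolding continuous_on_iff by fastforce
  obtain d2 where "d2 > 0" and d2: "\<And>p. p \<in> D \<Longrightarrow> dist p (uL, 0) < d2 \<Longrightarrow> dist ((\<lambda>(u, s). S' u s) p) (S' uL 0) < e"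
    using S'_cont uL0 \<open>e > 0\<close> unfolding continuous_on_iff by fastforce
  define \<rho> where "\<rho> = min (min \<rho>D \<rho>V) (min d1 d2) / 2"
  have near: "(u, t) \<in> D \<and> dist (S u t) uL < e \<and> dist (S' u t) (S' uL 0) < e"
    if "u \<in> ball uL \<rho>" "t \<in> {0..<\<rho>}" for u t
  proof -
    have "dist (u, t) (uL, 0) \<le> dist u uL + dist t 0"
      by (rule dist_Pair_le_add)
    also have "\<dots> < 2 * \<rho>"
      using that by (auto simp: dist_commute dist_real_def)
    finally have "dist (u, t) (uL, 0) < min (min \<rho>D \<rho>V) (min d1 d2)"
      unfolding \<rho>_def by simp
    moreover have "u \<in> V"
      using that \<rho>V unfolding \<rho>_def by auto
    ultimately have "(u, t) \<in> D"
      using that \<rho>D by (auto simp: D dist_commute)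
    with \<open>dist (u, t) (uL, 0) < _\<close> show ?thesis
      using d1 d2 by fastforce
  qed
  have "\<rho> > 0" "ball uL \<rho> \<subseteq> V"
    using \<open>\<rho>D > 0\<close> \<open>\<rho>V > 0\<close> \<open>d1 > 0\<close> \<open>d2 > 0\<close> \<rho>V by (auto simp: \<rho>_def)
  then show ?thesis
    using that[of \<rho>] near by blast
qed

lemma rel_entropy_strict_mono_along_curve:
  assumes g_in_V: "\<And>t. t \<in> {0..<b} \<Longrightarrow> g t \<in> V" and "g 0 = u"
    and g_deriv: "\<And>t. t \<in> {0..<b} \<Longrightarrow> (g has_vector_derivative g' t) (at t within {0..<b})"
    and g'_near: "\<And>t. t \<in> {0..<b} \<Longrightarrow> norm (g' t - v) \<le> e"
    and hessian_pos_near: "\<And>t y. t \<in> {0..<b} \<Longrightarrow> dist y v \<le> e \<Longrightarrow> F'' (g t) (g' t) y > 0"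
  shows "strict_mono_on {0..<b} (\<lambda>t. rel_entropy eta u (g t))"
    and "continuous_on {0..<b} (\<lambda>t. rel_entropy eta u (g t))"
proof -
  have deriv: "((\<lambda>t. rel_entropy eta u (g t)) has_real_derivative F'' (g t) (g' t) (g t - u))
      (at t within {0..<b})" if "t \<in> {0..<b}" for t
    using bregman_along_curve_has_real_derivative[where F' = F' and F'' = F'' and g = g and t = t and u = u,
        OF eta_deriv[OF g_in_V[OF that]] F'_deriv[OF g_in_V[OF that]] g_deriv[OF that]]
    by (rule has_field_derivative_transform_within[OF _ zero_less_one that]) (simp add: g_in_V rel_entropy_eq)
  then show cont: "continuous_on {0..<b} (\<lambda>t. rel_entropy eta u (g t))"
    using DERIV_continuous continuous_on_eq_continuous_within by blast
  \<comment> \<open>The chord from \<open>u = g 0\<close> to \<open>g t\<close> points in a direction \<open>e\<close>-close to \<open>v\<close>, like \<open>g' t\<close> itself.\<close>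
  have deriv_pos: "F'' (g t) (g' t) (g t - u) > 0" if "0 < t" "t < b" for t
  proof -
    have "norm (g t - g 0 - t *\<^sub>R v) \<le> t * e"
    proof (rule norm_chord_deviation_le)
      fix x assume "x \<in> {0..t}"
      with that have "x \<in> {0..<b}" "{0..t} \<subseteq> {0..<b}"
        by auto
      then show "(g has_vector_derivative g' x) (at x within {0..t})" "norm (g' x - v) \<le> e"
        using has_vector_derivative_within_subset[OF g_deriv] g'_near by auto
    qed (use that in auto)
    moreover have "(1 / t) *\<^sub>R (g t - u) - v = (1 / t) *\<^sub>R (g t - g 0 - t *\<^sub>R v)"
      using that \<open>g 0 = u\<close> by (simp add: scaleR_diff_right)
    ultimately have "dist ((1 / t) *\<^sub>R (g t - u)) v \<le> e"
      using that by (simp add: dist_norm divide_le_eq mult.commute)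
    then have "F'' (g t) (g' t) ((1 / t) *\<^sub>R (g t - u)) > 0"
      using that by (intro hessian_pos_near) auto
    then show ?thesis
      using that by (simp add: blinfun.scaleR_right zero_less_divide_iff)
  qed
  show "strict_mono_on {0..<b} (\<lambda>t. rel_entropy eta u (g t))"
  proof (rule strict_mono_onI)
    fix x y assume "x \<in> {0..<b}" "y \<in> {0..<b}" "x < y"
    show "rel_entropy eta u (g x) < rel_entropy eta u (g y)"
    proof (rule DERIV_pos_imp_increasing_open[OF \<open>x < y\<close>])
      fix z assume "x < z" "z < y"
      then have "z \<in> {0<..<b}"
        using \<open>x \<in> {0..<b}\<close> \<open>y \<in> {0..<b}\<close> by auto
      then have "at z within {0..<b} = at z"
        by (intro at_within_open_subset[of z "{0<..<b}"]) auto
      then show "\<exists>d. ((\<lambda>t. rel_entropy eta u (g t)) has_real_derivative d) (at z) \<and> 0 < d"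
        using deriv[of z] deriv_pos[of z] \<open>z \<in> {0<..<b}\<close> by auto
    next
      show "continuous_on {x..y} (\<lambda>t. rel_entropy eta u (g t))"
        using cont by (rule continuous_on_subset) (use \<open>x \<in> {0..<b}\<close> \<open>y \<in> {0..<b}\<close> in auto)
    qed
  qed
qed

lemma rel_entropy_shock_strict_mono:
  obtains \<rho> where "\<rho> > 0" and "ball uL \<rho> \<subseteq> V"
    and "\<And>u t. u \<in> ball uL \<rho> \<Longrightarrow> t \<in> {0..<\<rho>} \<Longrightarrow> (u, t) \<in> D"
    and "\<And>u. u \<in> ball uL \<rho> \<Longrightarrow> strict_mono_on {0..<\<rho>} (\<lambda>t. rel_entropy eta u (S u t))"
    and "\<And>u. u \<in> ball uL \<rho> \<Longrightarrow> continuous_on {0..<\<rho>} (\<lambda>t. rel_entropy eta u (S u t))"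
proof -
  have "isCont F'' uL"
    using F''_cont open_V uL_in_V continuous_on_eq_continuous_at by blast
  from bilinear_pos_near[OF this hessian_pos[OF uL_in_V S'_nonzero]]
  obtain \<epsilon> where "\<epsilon> > 0" and \<epsilon>: "\<And>w x y. dist w uL < \<epsilon> \<Longrightarrow> dist x (S' uL 0) < \<epsilon> \<Longrightarrow>
      dist y (S' uL 0) < \<epsilon> \<Longrightarrow> F'' w x y > 0"
    by blast
  obtain \<rho> where "\<rho> > 0" "ball uL \<rho> \<subseteq> V" and near: "\<And>u t. u \<in> ball uL \<rho> \<Longrightarrow> t \<in> {0..<\<rho>} \<Longrightarrow>
      (u, t) \<in> D \<and> dist (S u t) uL < \<epsilon> / 2 \<and> dist (S' u t) (S' uL 0) < \<epsilon> / 2"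
    using shock_curves_near_base_point[of "\<epsilon> / 2"] \<open>\<epsilon> > 0\<close> by auto
  have "strict_mono_on {0..<\<rho>} (\<lambda>t. rel_entropy eta u (S u t)) \<and>
      continuous_on {0..<\<rho>} (\<lambda>t. rel_entropy eta u (S u t))" if "u \<in> ball uL \<rho>" for u
  proof -
    have slice: "(\<lambda>\<tau>. (u, \<tau>)) ` {0..<\<rho>} \<subseteq> D"
      using near that by auto
    have "u \<in> V"
      using that \<open>ball uL \<rho> \<subseteq> V\<close> by auto
    have "S u t \<in> V" and "(S u has_vector_derivative S' u t) (at t within {0..<\<rho>})"
      and "norm (S' u t - S' uL 0) \<le> \<epsilon> / 2"
      and "\<And>y. dist y (S' uL 0) \<le> \<epsilon> / 2 \<Longrightarrow> F'' (S u t) (S' u t) y > 0"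
      if "t \<in> {0..<\<rho>}" for t
      using \<epsilon>[of "S u t" "S' u t"] near[OF \<open>u \<in> ball uL \<rho>\<close> that] S_in_V S_deriv[OF _ slice] \<open>\<epsilon> > 0\<close>
      by (auto simp: dist_norm)
    then show ?thesis
      using rel_entropy_strict_mono_along_curve[of \<rho> "S u" u "S' u" "S' uL 0" "\<epsilon> / 2"] S_0 \<open>u \<in> V\<close>
      by blast
  qed
  then show ?thesis
    using that \<open>\<rho> > 0\<close> \<open>ball uL \<rho> \<subseteq> V\<close> near by blast
qed

lemma rel_entropy_difference_small:
  assumes "s0' > 0" and a_cont: "continuous_on {0..<s0'} a" and "e > 0"
  obtains \<delta> where "\<delta> > 0" and "\<delta> \<le> s0'" and "ball uL \<delta> \<subseteq> V" and "\<And>s. s \<in> {0..<\<delta>} \<Longrightarrow> (uL, s) \<in> D"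
    and "\<And>u s. u \<in> ball uL \<delta> \<Longrightarrow> s \<in> {0..<\<delta>} \<Longrightarrow>
           rel_entropy eta u (S uL s) - a s * rel_entropy eta u uL < e"
proof -
  obtain \<rho> where "\<rho> > 0" and "ball uL \<rho> \<subseteq> V" and in_D: "\<And>u t. u \<in> ball uL \<rho> \<Longrightarrow> t \<in> {0..<\<rho>} \<Longrightarrow> (u, t) \<in> D"
    using shock_curves_near_base_point[OF zero_less_one] by metis
  define A where "A = ball uL \<rho> \<times> {0..<min \<rho> s0'}"
  define h where "h p = rel_entropy eta (fst p) (S uL (snd p)) - a (snd p) * rel_entropy eta (fst p) uL" for p
  have "continuous_on A (\<lambda>p. S uL (snd p))"
    using in_D \<open>\<rho> > 0\<close> by (intro continuous_on_shock_curves continuous_intros) (auto simp: A_def)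
  moreover have "continuous_on A (\<lambda>p. a (snd p))"
    by (rule continuous_on_compose2[OF a_cont continuous_on_snd]) (auto simp: A_def)
  moreover have "fst ` A \<subseteq> V" "(\<lambda>p. S uL (snd p)) ` A \<subseteq> V"
    using \<open>ball uL \<rho> \<subseteq> V\<close> S_in_V in_D \<open>\<rho> > 0\<close> by (auto simp: A_def)
  ultimately have "continuous_on A h"
    unfolding h_def using uL_in_V
    by (intro continuous_intros continuous_on_rel_entropy) auto
  moreover have "(uL, 0) \<in> A" "h (uL, 0) = 0"
    using \<open>\<rho> > 0\<close> \<open>s0' > 0\<close> by (auto simp: A_def h_def S_0 uL_in_V rel_entropy_self)
  ultimately obtain d where "d > 0" and d: "\<And>p. p \<in> A \<Longrightarrow> dist p (uL, 0) < d \<Longrightarrow> h p < e"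
    using \<open>e > 0\<close> unfolding continuous_on_iff by (metis dist_real_def abs_less_iff diff_zero)
  define \<delta> where "\<delta> = min (min \<rho> s0') d / 2"
  have "h (u, s) < e" if "u \<in> ball uL \<delta>" "s \<in> {0..<\<delta>}" for u s
  proof (rule d)
    show "(u, s) \<in> A"
      using that by (auto simp: A_def \<delta>_def)
    have "dist (u, s) (uL, 0) \<le> dist u uL + dist s 0"
      by (rule dist_Pair_le_add)
    also have "\<dots> < d"
      using that by (auto simp: \<delta>_def dist_commute dist_real_def)
    finally show "dist (u, s) (uL, 0) < d" .
  qed
  moreover have "\<delta> > 0" "\<delta> \<le> s0'" "ball uL \<delta> \<subseteq> V" "\<And>s. s \<in> {0..<\<delta>} \<Longrightarrow> (uL, s) \<in> D"
    using \<open>\<rho> > 0\<close> \<open>s0' > 0\<close> \<open>d > 0\<close> \<open>ball uL \<rho> \<subseteq> V\<close> in_D[of uL] by (auto simp: \<delta>_def)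
  ultimately show ?thesis
    using that by (simp add: h_def)
qed

theorem unique_shock_matching_rel_entropy:
  assumes "s0' > 0" and "continuous_on {0..<s0'} a"
  shows "\<exists>R sbar s0. R > 0 \<and> sbar > 0 \<and> s0 > 0 \<and> s0 \<le> s0' \<and>
           ball uL R \<subseteq> V \<and>
           (\<forall>u\<in>ball uL R. \<forall>t\<in>{0..<sbar}. (u, t) \<in> D) \<and>
           (\<forall>s\<in>{0<..<s0}. (uL, s) \<in> D) \<and>
           (\<forall>s\<in>{0<..<s0}. \<forall>u\<in>ball uL R.
              a s * rel_entropy eta u uL - rel_entropy eta u (S uL s) < 0 \<longrightarrow>
              (\<exists>!t. t \<in> {0<..<sbar} \<and>
                 rel_entropy eta u (S u t) = - (a s * rel_entropy eta u uL - rel_entropy eta u (S uL s))))"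
proof -
  obtain \<rho> where "\<rho> > 0" and ball_\<rho>: "ball uL \<rho> \<subseteq> V" and in_D: "\<And>u t. u \<in> ball uL \<rho> \<Longrightarrow> t \<in> {0..<\<rho>} \<Longrightarrow> (u, t) \<in> D"
    and mono: "\<And>u. u \<in> ball uL \<rho> \<Longrightarrow> strict_mono_on {0..<\<rho>} (\<lambda>t. rel_entropy eta u (S u t))"
    and cont: "\<And>u. u \<in> ball uL \<rho> \<Longrightarrow> continuous_on {0..<\<rho>} (\<lambda>t. rel_entropy eta u (S u t))"
    by (rule rel_entropy_shock_strict_mono) blast
  define t1 where "t1 = \<rho> / 2"
  have t1: "0 < t1" "t1 < \<rho>"
    using \<open>\<rho> > 0\<close> by (auto simp: t1_def)
  have at_0: "rel_entropy eta u (S u 0) = 0" if "u \<in> ball uL \<rho>" for u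
    using that ball_\<rho> by (auto simp: S_0 rel_entropy_self)
  \<comment> \<open>The level \<open>m\<close> reached at time \<open>t1\<close> from \<open>uL\<close> stays above \<open>m/2\<close> for \<open>u\<close> near \<open>uL\<close>,
      while the prescribed level is below \<open>m/2\<close> for \<open>u\<close> near \<open>uL\<close> and small \<open>s\<close>.\<close>
  define m where "m = rel_entropy eta uL (S uL t1)"
  have "m > 0"
    using strict_mono_onD[OF mono, of uL 0 t1] at_0[of uL] t1 \<open>\<rho> > 0\<close> by (simp add: m_def)
  have "continuous_on (ball uL \<rho>) (\<lambda>u. S u t1)"
    using in_D t1 by (intro continuous_on_shock_curves continuous_on_id continuous_on_const) auto
  then have "continuous_on (ball uL \<rho>) (\<lambda>u. rel_entropy eta u (S u t1))"
    using ball_\<rho> S_in_V in_D t1 by (intro continuous_on_rel_entropy continuous_on_id) auto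
  from continuous_on_iff[THEN iffD1, rule_format, OF this _ half_gt_zero[OF \<open>m > 0\<close>], of uL]
  obtain R1 where "R1 > 0"
    and R1: "\<And>u. u \<in> ball uL \<rho> \<Longrightarrow> dist u uL < R1 \<Longrightarrow> dist (rel_entropy eta u (S u t1)) m < m / 2"
    using \<open>\<rho> > 0\<close> by (auto simp: m_def)
  have R1_lower: "m / 2 < rel_entropy eta u (S u t1)" if "u \<in> ball uL \<rho>" "dist u uL < R1" for u
    using R1[OF that] unfolding dist_real_def abs_diff_less_iff by linarith
  obtain \<delta> where "\<delta> > 0" "\<delta> \<le> s0'" "\<And>s. s \<in> {0..<\<delta>} \<Longrightarrow> (uL, s) \<in> D"
    and small: "\<And>u s. u \<in> ball uL \<delta> \<Longrightarrow> s \<in> {0..<\<delta>} \<Longrightarrow> rel_entropy eta u (S uL s) - a s * rel_entropy eta u uL < m / 2"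
    by (rule rel_entropy_difference_small[OF assms half_gt_zero[OF \<open>m > 0\<close>]]) blast
  define R where "R = min \<rho> (min R1 \<delta>)"
  have crossing: "\<exists>!t. t \<in> {0<..<\<rho>} \<and>
      rel_entropy eta u (S u t) = - (a s * rel_entropy eta u uL - rel_entropy eta u (S uL s))"
    if "s \<in> {0<..<\<delta>}" "u \<in> ball uL R" and "a s * rel_entropy eta u uL - rel_entropy eta u (S uL s) < 0" for s u
  proof -
    have "u \<in> ball uL \<rho>" "u \<in> ball uL \<delta>" "dist u uL < R1"
      using \<open>u \<in> ball uL R\<close> by (auto simp: R_def dist_commute)
    then show ?thesis
      using small[of u s] R1_lower[of u] that
      by (intro unique_level_crossing[OF mono cont at_0 t1]) auto
  qed
  show ?thesis
    using \<open>\<rho> > 0\<close> \<open>R1 > 0\<close> \<open>\<delta> > 0\<close> \<open>\<delta> \<le> s0'\<close> ball_\<rho> in_D \<open>\<And>s. s \<in> {0..<\<delta>} \<Longrightarrow> (uL, s) \<in> D\<close> crossing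
    by (intro exI[of _ R] exI[of _ \<rho>] exI[of _ \<delta>] conjI ballI impI) (auto simp: R_def)
qed

end

theorem lemma4:
  fixes f :: "real^'n \<Rightarrow> real^'n" and V :: "(real^'n) set"
    and lam :: "'n \<Rightarrow> real^'n \<Rightarrow> real" and r :: "'n \<Rightarrow> real^'n \<Rightarrow> real^'n"
    and eta :: "real^'n \<Rightarrow> real" and i :: 'n
    and S :: "real^'n \<Rightarrow> real \<Rightarrow> real^'n" and D :: "((real^'n) \<times> real) set"
    and uL :: "real^'n" and a :: "real \<Rightarrow> real" and s0' :: real
  assumes "open V" and "connected V"
    and "C4_on f V"
    and "strictly_hyperbolic f V lam r"
    and "strictly_convex_entropy f V eta"
    and "shock_curves f V r i S D"
    and "uL \<in> V"
    and "s0' > 0" and "C1_on_Ico a s0'" and "a 0 = 1" and "\<forall>s\<in>{0..<s0'}. a s \<ge> 1"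
  shows "\<exists>R sbar s0. R > 0 \<and> sbar > 0 \<and> s0 > 0 \<and> s0 \<le> s0' \<and>
           ball uL R \<subseteq> V \<and>
           (\<forall>u\<in>ball uL R. \<forall>t\<in>{0..<sbar}. (u, t) \<in> D) \<and>
           (\<forall>s\<in>{0<..<s0}. (uL, s) \<in> D) \<and>
           (\<forall>s\<in>{0<..<s0}. \<forall>u\<in>ball uL R.
              a s * rel_entropy eta u uL - rel_entropy eta u (S uL s) < 0 \<longrightarrow>
              (\<exists>!t. t \<in> {0<..<sbar} \<and>
                 rel_entropy eta u (S u t) = - (a s * rel_entropy eta u uL - rel_entropy eta u (S uL s))))"
proof -
  obtain F' :: "real^'n \<Rightarrow> ((real^'n) \<Rightarrow>\<^sub>L real)"
    and F'' :: "real^'n \<Rightarrow> ((real^'n) \<Rightarrow>\<^sub>L (real^'n) \<Rightarrow>\<^sub>L real)"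
    where "\<And>x. x \<in> V \<Longrightarrow> (eta has_derivative F' x) (at x)"
    and "\<And>x. x \<in> V \<Longrightarrow> (F' has_derivative F'' x) (at x)"
    and "continuous_on V F''" and "\<And>x h. x \<in> V \<Longrightarrow> h \<noteq> 0 \<Longrightarrow> F'' x h h > 0"
    by (rule strictly_convex_entropy_hessian[OF assms(5,1)]) blast
  moreover obtain S' where "continuous_on D (\<lambda>(u, s). S u s)" and "continuous_on D (\<lambda>(u, s). S' u s)"
    and "\<And>u t T. (u, t) \<in> D \<Longrightarrow> (\<lambda>\<tau>. (u, \<tau>)) ` T \<subseteq> D \<Longrightarrow> (S u has_vector_derivative S' u t) (at t within T)"
    and S'_0: "\<And>u. u \<in> V \<Longrightarrow> S' u 0 = r i u"
    by (rule shock_curves_velocity[OF assms(6)]) blast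
  moreover have "S' uL 0 \<noteq> 0"
    using assms(4,7) S'_0 unfolding strictly_hyperbolic_def by auto
  ultimately interpret entropy_shock_family V eta F' F'' S S' D uL
    using assms(1,6,7) by unfold_locales (auto simp: shock_curves_def)
  from assms(9) obtain a' where "\<And>x. x \<in> {0..<s0'} \<Longrightarrow> (a has_real_derivative a' x) (at x within {0..<s0'})"
    unfolding C1_on_Ico_def by blast
  then have "continuous_on {0..<s0'} a"
    using DERIV_continuous continuous_on_eq_continuous_within by blast
  then show ?thesis
    by (rule unique_shock_matching_rel_entropy[OF assms(8)])
qed

end
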